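(* Fix integers $1\le n<N$, probabilities $p_0,p_1\in(0,1)$, a nonempty collection $\mathcal V$ of subsets of $\{1,\dots,N\}$ each of cardinality $n$, integers $0\le m'_\alpha\le m_\alpha$, and a threshold $b\in\mathbb R$. Let $G^{(1)},G^{(2)},\ldots$ be random undirected graphs on the vertex set $\{1,\dots,N\}$, with adjacency matrices $G^{(t)}\in\{0,1\}^{N\times N}$. For a subset $V\in\mathcal V$ and integers $k\le t$ set \[ R_{t,k,V}=\sum_{\substack{i,j\in V\\ i<j}}\sum_{m=k}^{t}\Big[G^{(m)}_{ij}\log\frac{p_1}{p_0}+(1-G^{(m)}_{ij})\log\frac{1-p_1}{1-p_0}\Big], \] and define the stopping time \[ T_{\mathrm G}=\inf\Big\{t:\ \max_{t-m_\alpha\le k\le t-m'_\alpha}\ \max_{V\in\mathcal V} R_{t,k,V}>b\Big\}. \] Let $\mathbb P_\infty$ denote the probability measure under which $G^{(1)},G^{(2)},\ldots$ are i.i.d. Erdős–Rényi graphs $\mathrm{ER}(N,p_0)$, i.e. all entries $G^{(t)}_{ij}$, $i<j$, $t\ge1$, are independent Bernoulli$(p_0)$. Then \[ \sup_{\tau\ge 1}\mathbb P_\infty\big(\tau\le T_{\mathrm G}<\tau+m_\alpha\big)\le 2m_\alpha e^{-b}\binom{N}{n}. \]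
   Context: $\mathrm{ER}(N,p)$ denotes the Erdős–Rényi random graph on $N$ labeled vertices in which each of the $\binom N2$ possible edges is present independently with probability $p$; $G^{(t)}_{ij}=G^{(t)}_{ji}=1$ iff vertices $i$ and $j$ are joined at time $t$. The collection $\mathcal V$ is the set of candidate subgraphs (vertex subsets of size $n$) where a change might occur; $|\mathcal V|\le\binom Nn$. *)

theory Defs
  imports "HOL-Probability.Probability"
begin

text \<open>A random graph sequence is a family G t i j \<omega> (edge between i and j at time t, for outcome \<omega>).
Only entries with i < j are used.\<close>

definition llr_stat ::
  "real \<Rightarrow> real \<Rightarrow> (nat \<Rightarrow> nat \<Rightarrow> nat \<Rightarrow> 'a \<Rightarrow> bool) \<Rightarrow> 'a \<Rightarrow> nat \<Rightarrow> nat \<Rightarrow> nat set \<Rightarrow> real"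
  where
  "llr_stat p0 p1 G \<omega> t k V =
     (\<Sum>(i,j)\<in>{(i,j). i \<in> V \<and> j \<in> V \<and> i < j}.
        \<Sum>m\<in>{k..t}. of_bool (G m i j \<omega>) * ln (p1 / p0)
                    + (1 - of_bool (G m i j \<omega>)) * ln ((1 - p1) / (1 - p0)))"

definition alarm ::
  "real \<Rightarrow> real \<Rightarrow> nat set set \<Rightarrow> nat \<Rightarrow> nat \<Rightarrow> real \<Rightarrow>
   (nat \<Rightarrow> nat \<Rightarrow> nat \<Rightarrow> 'a \<Rightarrow> bool) \<Rightarrow> 'a \<Rightarrow> nat \<Rightarrow> bool"
  where
  "alarm p0 p1 \<V> m\<alpha> m\<alpha>' b G \<omega> t \<longleftrightarrow>
     1 \<le> t \<and> (\<exists>k. 1 \<le> k \<and> int t - int m\<alpha> \<le> int k \<and> int k \<le> int t - int m\<alpha>' \<and>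
                  (\<exists>V\<in>\<V>. llr_stat p0 p1 G \<omega> t k V > b))"

definition stop_time ::
  "real \<Rightarrow> real \<Rightarrow> nat set set \<Rightarrow> nat \<Rightarrow> nat \<Rightarrow> real \<Rightarrow>
   (nat \<Rightarrow> nat \<Rightarrow> nat \<Rightarrow> 'a \<Rightarrow> bool) \<Rightarrow> 'a \<Rightarrow> enat"
  where
  "stop_time p0 p1 \<V> m\<alpha> m\<alpha>' b G \<omega> =
     (if \<exists>t. alarm p0 p1 \<V> m\<alpha> m\<alpha>' b G \<omega> t
      then enat (LEAST t. alarm p0 p1 \<V> m\<alpha> m\<alpha>' b G \<omega> t) else \<infinity>)"

end

theory Submission
  imports Defs
begin

text \<open>Under the null hypothesis, for a fixed window start k and subset V the quantity
  exp R(t,k,V) is the product of the likelihood ratios of the edges inside V observed at the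
  times k..t. These ratios are independent with mean one, so t \<mapsto> exp R(t,k,V) is a
  nonnegative martingale, and Doob's maximal inequality bounds the probability that it ever
  exceeds e^b by e^-b. If the first alarm rings in [\<tau>, \<tau> + m\<alpha>), then this happens before
  time \<tau> + m\<alpha> for one of at most 2 m\<alpha> window starts k and one of at most (N choose n)
  subsets V, and a union bound finishes the proof.\<close>

definition first_crossing :: "real \<Rightarrow> (nat \<Rightarrow> 'a \<Rightarrow> real) \<Rightarrow> nat \<Rightarrow> 'a set" where
  "first_crossing c Z t = {\<omega>. c < Z t \<omega> \<and> (\<forall>s<t. Z s \<omega> \<le> c)}"

lemma disjoint_family_first_crossing: "disjoint_family (first_crossing c Z)"
  unfolding disjoint_family_on_def
proof (intro ballI impI)
  fix s t :: nat assume "s \<noteq> t"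
  then consider "s < t" | "t < s" by linarith
  then show "first_crossing c Z s \<inter> first_crossing c Z t = {}"
    by cases (fastforce simp: first_crossing_def)+
qed

lemma ex_crossing_iff_ex_first_crossing:
  "(\<exists>t\<le>n. c < Z t \<omega>) \<longleftrightarrow> (\<exists>t\<le>n. \<omega> \<in> first_crossing c Z t)"
proof
  assume "\<exists>t\<le>n. c < Z t \<omega>"
  then obtain t where "t \<le> n" "c < Z t \<omega>" by blast
  define t0 where "t0 = (LEAST t. c < Z t \<omega>)"
  have "c < Z t0 \<omega>" "t0 \<le> t"
    unfolding t0_def using \<open>c < Z t \<omega>\<close> by (auto intro: LeastI Least_le)
  moreover have "\<forall>s<t0. Z s \<omega> \<le> c"
    unfolding t0_def by (meson not_less_Least not_le)
  ultimately show "\<exists>t\<le>n. \<omega> \<in> first_crossing c Z t"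
    using \<open>t \<le> n\<close> unfolding first_crossing_def by (intro exI[of _ t0]) auto
qed (auto simp: first_crossing_def)

lemma first_crossing_sets:
  assumes "\<And>s. s \<le> t \<Longrightarrow> Z s \<in> borel_measurable N"
  shows "first_crossing c Z t \<inter> space N \<in> sets N"
proof -
  have "first_crossing c Z t \<inter> space N =
      {\<omega>\<in>space N. c < Z t \<omega>} \<inter> {\<omega>\<in>space N. \<forall>s\<in>{..<t}. Z s \<omega> \<le> c}"
    unfolding first_crossing_def by auto
  also have "\<dots> \<in> sets N"
    using assms by (intro sets.Int sets.sets_Collect_finite_All borel_measurable_le
        borel_measurable_less measurable_const) auto
  finally show ?thesis .
qed

lemma integrable_mult_indicator_first_crossing:
  fixes f :: "'a \<Rightarrow> real"
  assumes "\<And>s. s \<le> t \<Longrightarrow> Z s \<in> borel_measurable M" and "integrable M f"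
  shows "integrable M (\<lambda>\<omega>. f \<omega> * indicator (first_crossing c Z t) \<omega>)"
proof -
  have "integrable M (\<lambda>\<omega>. f \<omega> * indicator (first_crossing c Z t \<inter> space M) \<omega>)"
    using assms by (intro integrable_real_mult_indicator first_crossing_sets)
  moreover have "integrable M (\<lambda>\<omega>. f \<omega> * indicator (first_crossing c Z t \<inter> space M) \<omega>) \<longleftrightarrow>
      integrable M (\<lambda>\<omega>. f \<omega> * indicator (first_crossing c Z t) \<omega>)"
    by (intro Bochner_Integration.integrable_cong) (auto simp: indicator_def)
  ultimately show ?thesis by simp
qed

context prob_space
begin

lemma prob_first_crossing_le:
  fixes Z :: "nat \<Rightarrow> 'a \<Rightarrow> real"
  assumes "\<And>s. s \<le> t \<Longrightarrow> Z s \<in> borel_measurable M" and "integrable M (Z t)" and "0 < c"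
  shows "prob (first_crossing c Z t \<inter> space M) \<le>
    (\<integral>\<omega>. Z t \<omega> * indicator (first_crossing c Z t) \<omega> \<partial>M) / c"
proof -
  have "integrable M (indicator (first_crossing c Z t) :: 'a \<Rightarrow> real)"
    using first_crossing_sets[OF assms(1)]
    by (simp add: integrable_indicator_iff less_top[symmetric])
  then have "(\<integral>\<omega>. indicator (first_crossing c Z t) \<omega> \<partial>M) \<le>
      (\<integral>\<omega>. Z t \<omega> * indicator (first_crossing c Z t) \<omega> / c \<partial>M)"
  proof (rule integral_mono)
    show "integrable M (\<lambda>\<omega>. Z t \<omega> * indicator (first_crossing c Z t) \<omega> / c)"
      using assms(1,2) by (simp add: integrable_mult_indicator_first_crossing)
    show "indicator (first_crossing c Z t) \<omega> \<le> Z t \<omega> * indicator (first_crossing c Z t) \<omega> / c" for \<omega>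
      using assms(3) by (auto simp: indicator_def first_crossing_def)
  qed
  then show ?thesis
    by simp
qed

text \<open>Doob's maximal inequality; the martingale property is only needed on the events of
  first crossing of the level c.\<close>

lemma prob_ex_crossing_le:
  fixes Z :: "nat \<Rightarrow> 'a \<Rightarrow> real"
  assumes meas: "\<And>t. t \<le> n \<Longrightarrow> Z t \<in> borel_measurable M"
    and int: "\<And>t. t \<le> n \<Longrightarrow> integrable M (Z t)"
    and nonneg: "\<And>\<omega>. \<omega> \<in> space M \<Longrightarrow> 0 \<le> Z n \<omega>"
    and c: "0 < c"
    and mart: "\<And>t. t \<le> n \<Longrightarrow>
      (\<integral>\<omega>. Z t \<omega> * indicator (first_crossing c Z t) \<omega> \<partial>M) \<le>
      (\<integral>\<omega>. Z n \<omega> * indicator (first_crossing c Z t) \<omega> \<partial>M)"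
  shows "prob {\<omega>\<in>space M. \<exists>t\<le>n. c < Z t \<omega>} \<le> (\<integral>\<omega>. Z n \<omega> \<partial>M) / c"
proof -
  define F where "F = first_crossing c Z"
  have int_F: "integrable M (\<lambda>\<omega>. Z n \<omega> * indicator (F t) \<omega>)" if "t \<le> n" for t
    unfolding F_def using that meas int by (intro integrable_mult_indicator_first_crossing) auto
  have "prob {\<omega>\<in>space M. \<exists>t\<le>n. c < Z t \<omega>} = prob (\<Union>t\<le>n. F t \<inter> space M)"
    unfolding F_def ex_crossing_iff_ex_first_crossing by (intro arg_cong[where f=prob]) auto
  also have "\<dots> = (\<Sum>t\<le>n. prob (F t \<inter> space M))"
    using meas disjoint_family_first_crossing[of c Z]
    by (intro finite_measure_finite_Union)
       (auto simp: F_def disjoint_family_on_def intro!: first_crossing_sets)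
  also have "\<dots> \<le> (\<Sum>t\<le>n. (\<integral>\<omega>. Z n \<omega> * indicator (F t) \<omega> \<partial>M) / c)"
    unfolding F_def using meas int c mart
    by (intro sum_mono order_trans[OF prob_first_crossing_le] divide_right_mono) auto
  also have "\<dots> = (\<integral>\<omega>. (\<Sum>t\<le>n. Z n \<omega> * indicator (F t) \<omega>) \<partial>M) / c"
    unfolding sum_divide_distrib[symmetric] by (subst Bochner_Integration.integral_sum) (use int_F in auto)
  also have "\<dots> \<le> (\<integral>\<omega>. Z n \<omega> \<partial>M) / c"
  proof (intro divide_right_mono integral_mono)
    show "integrable M (\<lambda>\<omega>. \<Sum>t\<le>n. Z n \<omega> * indicator (F t) \<omega>)"
      using int_F by (intro Bochner_Integration.integrable_sum) auto
    fix \<omega> assume "\<omega> \<in> space M"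
    have "(\<Sum>t\<le>n. Z n \<omega> * indicator (F t) \<omega>) = Z n \<omega> * indicator (\<Union>t\<le>n. F t) \<omega>"
      using disjoint_family_first_crossing[of c Z]
      by (simp add: sum_distrib_left[symmetric] indicator_UN_disjoint disjoint_family_on_def F_def)
    also have "\<dots> \<le> Z n \<omega>"
      using nonneg[OF \<open>\<omega> \<in> space M\<close>] by (simp add: indicator_def)
    finally show "(\<Sum>t\<le>n. Z n \<omega> * indicator (F t) \<omega>) \<le> Z n \<omega>" .
  qed (use int c in auto)
  finally show ?thesis .
qed

lemma
  fixes \<phi> :: "'b \<Rightarrow> real"
  assumes ind: "indep_vars (\<lambda>_. S) X I" and fin: "finite I"
    and \<phi>: "\<phi> \<in> borel_measurable S"
    and mean: "\<And>i. i \<in> I \<Longrightarrow> (\<integral>\<omega>. \<phi> (X i \<omega>) \<partial>M) = 1"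
  shows integrable_prod_mean_one: "integrable M (\<lambda>\<omega>. \<Prod>i\<in>I. \<phi> (X i \<omega>))"
    and integral_prod_mean_one: "(\<integral>\<omega>. (\<Prod>i\<in>I. \<phi> (X i \<omega>)) \<partial>M) = 1"
proof -
  have ind_\<phi>: "indep_vars (\<lambda>_. borel) (\<lambda>i \<omega>. \<phi> (X i \<omega>)) I"
    using ind \<phi> by (rule indep_vars_compose2)
  \<comment> \<open>a non-integrable function has Bochner integral 0, so mean 1 forces integrability\<close>
  have int: "integrable M (\<lambda>\<omega>. \<phi> (X i \<omega>))" if "i \<in> I" for i
    using mean[OF that] not_integrable_integral_eq by fastforce
  show "integrable M (\<lambda>\<omega>. \<Prod>i\<in>I. \<phi> (X i \<omega>))"
    using fin ind_\<phi> int by (rule indep_vars_integrable)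
  show "(\<integral>\<omega>. (\<Prod>i\<in>I. \<phi> (X i \<omega>)) \<partial>M) = 1"
    using indep_vars_lebesgue_integral[OF fin ind_\<phi> int] mean by simp
qed

lemma integral_restrict_mult_prod_mean_one:
  fixes f :: "('i \<Rightarrow> 'b) \<Rightarrow> real" and \<phi> :: "'b \<Rightarrow> real"
  assumes ind: "indep_vars (\<lambda>_. S) X I" and J: "J \<subseteq> I" and K: "K \<subseteq> I" "finite K" "J \<inter> K = {}"
    and f: "f \<in> borel_measurable (PiM J (\<lambda>_. S))" and int_f: "integrable M (\<lambda>\<omega>. f (\<lambda>i\<in>J. X i \<omega>))"
    and \<phi>: "\<phi> \<in> borel_measurable S" and mean: "\<And>i. i \<in> K \<Longrightarrow> (\<integral>\<omega>. \<phi> (X i \<omega>) \<partial>M) = 1"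
  shows "(\<integral>\<omega>. f (\<lambda>i\<in>J. X i \<omega>) * (\<Prod>i\<in>K. \<phi> (X i \<omega>)) \<partial>M) = (\<integral>\<omega>. f (\<lambda>i\<in>J. X i \<omega>) \<partial>M)"
proof -
  have "(\<lambda>h. \<Prod>i\<in>K. \<phi> (h i)) \<in> borel_measurable (PiM K (\<lambda>_. S))"
    using \<phi> by (intro borel_measurable_prod measurable_compose[OF measurable_component_singleton]) auto
  with indep_var_restrict[OF ind K(3) J K(1)] f
  have "indep_var borel (f \<circ> (\<lambda>\<omega>. \<lambda>i\<in>J. X i \<omega>)) borel ((\<lambda>h. \<Prod>i\<in>K. \<phi> (h i)) \<circ> (\<lambda>\<omega>. \<lambda>i\<in>K. X i \<omega>))"
    by (rule indep_var_compose)
  moreover have "(\<lambda>h. \<Prod>i\<in>K. \<phi> (h i)) \<circ> (\<lambda>\<omega>. \<lambda>i\<in>K. X i \<omega>) = (\<lambda>\<omega>. \<Prod>i\<in>K. \<phi> (X i \<omega>))"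
    by (auto intro!: prod.cong)
  ultimately have "indep_var borel (\<lambda>\<omega>. f (\<lambda>i\<in>J. X i \<omega>)) borel (\<lambda>\<omega>. \<Prod>i\<in>K. \<phi> (X i \<omega>))"
    by (simp add: comp_def)
  moreover note ind_K = indep_vars_subset[OF ind K(1)]
  ultimately show ?thesis
    using int_f integrable_prod_mean_one[OF ind_K K(2) \<phi> mean] integral_prod_mean_one[OF ind_K K(2) \<phi> mean]
    by (simp add: indep_var_lebesgue_integral)
qed

end

definition prod_process :: "('b \<Rightarrow> real) \<Rightarrow> ('i \<Rightarrow> 'a \<Rightarrow> 'b) \<Rightarrow> (nat \<Rightarrow> 'i set) \<Rightarrow> nat \<Rightarrow> 'a \<Rightarrow> real"
  where "prod_process \<phi> X I t \<omega> = (\<Prod>i\<in>I t. \<phi> (X i \<omega>))"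

context prob_space
begin

context
  fixes S :: "'b measure" and X :: "'i \<Rightarrow> 'a \<Rightarrow> 'b" and \<phi> :: "'b \<Rightarrow> real"
    and I :: "nat \<Rightarrow> 'i set" and n :: nat
  assumes indep: "indep_vars (\<lambda>_. S) X (I n)" and mono_I: "mono I" and finite_I: "finite (I n)"
    and \<phi>_meas: "\<phi> \<in> borel_measurable S"
    and mean_one: "\<And>i. i \<in> I n \<Longrightarrow> (\<integral>\<omega>. \<phi> (X i \<omega>) \<partial>M) = 1"
begin

lemma prod_process_measurable:
  assumes "t \<le> n"
  shows "prod_process \<phi> X I t \<in> borel_measurable M"
proof -
  have "X i \<in> measurable M S" if "i \<in> I t" for i
    using indep that monoD[OF mono_I assms] unfolding indep_vars_def by auto
  then show ?thesis
    unfolding prod_process_def by (intro borel_measurable_prod measurable_compose[OF _ \<phi>_meas])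
qed

lemma integrable_prod_process: "t \<le> n \<Longrightarrow> integrable M (prod_process \<phi> X I t)"
  unfolding prod_process_def using monoD[OF mono_I, of t n]
  by (intro integrable_prod_mean_one[OF indep_vars_subset[OF indep] finite_subset[OF _ finite_I] \<phi>_meas]
      mean_one) auto

lemma integral_prod_process_n: "(\<integral>\<omega>. prod_process \<phi> X I n \<omega> \<partial>M) = 1"
  unfolding prod_process_def using indep finite_I \<phi>_meas mean_one by (rule integral_prod_mean_one)

text \<open>The martingale property at a first crossing: from time t on, the process is multiplied by
  a mean-one factor independent of the variables indexed by I t, which determine the crossing.\<close>

lemma integral_prod_process_first_crossing:
  assumes "t \<le> n"
  defines "Z \<equiv> prod_process \<phi> X I"
  shows "(\<integral>\<omega>. Z n \<omega> * indicator (first_crossing c Z t) \<omega> \<partial>M) =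
    (\<integral>\<omega>. Z t \<omega> * indicator (first_crossing c Z t) \<omega> \<partial>M)"
proof -
  have sub: "I s \<subseteq> I t'" if "s \<le> t'" for s t'
    using mono_I that by (rule monoD)
  define Z' where "Z' s h = (\<Prod>i\<in>I s. \<phi> (h i))" for s and h :: "'i \<Rightarrow> 'b"
  define f where "f h = Z' t h * indicator (first_crossing c Z' t) h" for h
  have Z'_restrict: "Z' s (\<lambda>i\<in>I t. X i \<omega>) = Z s \<omega>" if "s \<le> t" for s \<omega>
    unfolding Z'_def Z_def prod_process_def using sub[OF that] by (intro prod.cong) auto
  have f_restrict: "f (\<lambda>i\<in>I t. X i \<omega>) = Z t \<omega> * indicator (first_crossing c Z t) \<omega>" for \<omega>
    unfolding f_def first_crossing_def by (simp add: Z'_restrict indicator_def)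
  have "Z' s \<in> borel_measurable (PiM (I t) (\<lambda>_. S))" if "s \<le> t" for s
    unfolding Z'_def using \<phi>_meas sub[OF that]
    by (intro borel_measurable_prod measurable_compose[OF measurable_component_singleton]) auto
  then have f_meas: "f \<in> borel_measurable (PiM (I t) (\<lambda>_. S))"
    unfolding f_def
    by (intro borel_measurable_times) (auto simp: borel_measurable_indicator_iff intro!: first_crossing_sets)
  have "Z n \<omega> = Z t \<omega> * (\<Prod>i\<in>I n - I t. \<phi> (X i \<omega>))" for \<omega>
    unfolding Z_def prod_process_def using prod.subset_diff[OF sub[OF assms(1)] finite_I]
    by (simp add: mult.commute)
  then have "(\<integral>\<omega>. Z n \<omega> * indicator (first_crossing c Z t) \<omega> \<partial>M) =
      (\<integral>\<omega>. f (\<lambda>i\<in>I t. X i \<omega>) * (\<Prod>i\<in>I n - I t. \<phi> (X i \<omega>)) \<partial>M)"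
    by (simp add: f_restrict mult_ac)
  also have "\<dots> = (\<integral>\<omega>. f (\<lambda>i\<in>I t. X i \<omega>) \<partial>M)"
  proof (rule integral_restrict_mult_prod_mean_one[OF indep sub[OF assms(1)] _ _ _ f_meas _ \<phi>_meas])
    show "integrable M (\<lambda>\<omega>. f (\<lambda>i\<in>I t. X i \<omega>))"
      unfolding f_restrict Z_def using assms(1)
      by (intro integrable_mult_indicator_first_crossing prod_process_measurable integrable_prod_process)
         auto
  qed (use finite_I mean_one in auto)
  finally show ?thesis
    by (simp add: f_restrict)
qed

lemma sets_ex_prod_process_gt: "{\<omega>\<in>space M. \<exists>t\<le>n. c < prod_process \<phi> X I t \<omega>} \<in> events"
proof -
  have "{\<omega>\<in>space M. \<exists>t\<le>n. c < prod_process \<phi> X I t \<omega>} =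
      {\<omega>\<in>space M. \<exists>t\<in>{..n}. c < prod_process \<phi> X I t \<omega>}"
    by auto
  also have "\<dots> \<in> events"
    using prod_process_measurable
    by (intro sets.sets_Collect_finite_Ex borel_measurable_less measurable_const) auto
  finally show ?thesis .
qed

lemma prob_ex_prod_process_gt_le:
  assumes "\<And>x. 0 \<le> \<phi> x" and "0 < c"
  shows "prob {\<omega>\<in>space M. \<exists>t\<le>n. c < prod_process \<phi> X I t \<omega>} \<le> 1 / c"
proof -
  have "prob {\<omega>\<in>space M. \<exists>t\<le>n. c < prod_process \<phi> X I t \<omega>} \<le>
      (\<integral>\<omega>. prod_process \<phi> X I n \<omega> \<partial>M) / c"
  proof (rule prob_ex_crossing_le[OF prod_process_measurable integrable_prod_process])
    show "0 \<le> prod_process \<phi> X I n \<omega>" for \<omega>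
      unfolding prod_process_def using assms(1) by (simp add: prod_nonneg)
  qed (simp_all add: assms(2) integral_prod_process_first_crossing)
  then show ?thesis
    by (simp add: integral_prod_process_n)
qed

end

end

definition bernoulli_lr :: "real \<Rightarrow> real \<Rightarrow> bool \<Rightarrow> real" where
  "bernoulli_lr p0 p1 x = (if x then p1 / p0 else (1 - p1) / (1 - p0))"

lemma bernoulli_lr_nonneg: "0 \<le> p0 \<Longrightarrow> p0 \<le> 1 \<Longrightarrow> 0 \<le> p1 \<Longrightarrow> p1 \<le> 1 \<Longrightarrow> 0 \<le> bernoulli_lr p0 p1 x"
  by (simp add: bernoulli_lr_def)

lemma (in prob_space) expectation_bernoulli_lr:
  assumes "Y \<in> measurable M (count_space UNIV)"
    and "distr M (count_space UNIV) Y = measure_pmf (bernoulli_pmf p0)" and "0 < p0" "p0 < 1"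
  shows "(\<integral>\<omega>. bernoulli_lr p0 p1 (Y \<omega>) \<partial>M) = 1"
proof -
  have "(\<integral>\<omega>. bernoulli_lr p0 p1 (Y \<omega>) \<partial>M) = (\<integral>x. bernoulli_lr p0 p1 x \<partial>bernoulli_pmf p0)"
    using assms(1) by (simp add: integral_distr[symmetric] assms(2))
  also have "\<dots> = 1"
    using assms(3,4) by (simp add: bernoulli_lr_def)
  finally show ?thesis .
qed

lemma llr_stat_eq_ln_prod_process:
  assumes "finite V" and "0 < p0" "p0 < 1" "0 < p1" "p1 < 1"
  shows "llr_stat p0 p1 G \<omega> t k V = ln (prod_process (bernoulli_lr p0 p1) (\<lambda>(m, i, j). G m i j)
    (\<lambda>t. {k..t} \<times> {(i, j). i \<in> V \<and> j \<in> V \<and> i < j}) t \<omega>)"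
proof -
  define E where "E = {(i, j). i \<in> V \<and> j \<in> V \<and> i < j}"
  have "finite E"
    unfolding E_def by (rule finite_subset[of _ "V \<times> V"]) (use assms(1) in auto)
  have lr_pos: "0 < bernoulli_lr p0 p1 x" for x
    using assms(2-5) by (simp add: bernoulli_lr_def)
  have summand: "of_bool x * ln (p1 / p0) + (1 - of_bool x) * ln ((1 - p1) / (1 - p0)) =
      ln (bernoulli_lr p0 p1 x)" for x
    by (cases x) (simp_all add: bernoulli_lr_def)
  have "llr_stat p0 p1 G \<omega> t k V = (\<Sum>(i, j)\<in>E. \<Sum>m\<in>{k..t}. ln (bernoulli_lr p0 p1 (G m i j \<omega>)))"
    unfolding llr_stat_def E_def summand ..
  also have "\<dots> = (\<Sum>m\<in>{k..t}. \<Sum>(i, j)\<in>E. ln (bernoulli_lr p0 p1 (G m i j \<omega>)))"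
    unfolding split_def by (rule sum.swap)
  also have "\<dots> = (\<Sum>(m, i, j)\<in>{k..t} \<times> E. ln (bernoulli_lr p0 p1 (G m i j \<omega>)))"
    unfolding sum.cartesian_product by (rule sum.cong) auto
  also have "\<dots> = ln (prod_process (bernoulli_lr p0 p1) (\<lambda>(m, i, j). G m i j) (\<lambda>t. {k..t} \<times> E) t \<omega>)"
    unfolding prod_process_def using \<open>finite E\<close> lr_pos
    by (subst ln_prod) (auto simp: split_def less_imp_neq[symmetric])
  finally show ?thesis
    unfolding E_def .
qed

lemma stop_time_in_window_imp_llr_gt:
  assumes "enat \<tau> \<le> stop_time p0 p1 \<V> m\<alpha> m\<alpha>' b G \<omega>"
    and "stop_time p0 p1 \<V> m\<alpha> m\<alpha>' b G \<omega> < enat (\<tau> + m\<alpha>)"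
  shows "\<exists>k\<in>{max 1 (\<tau> - m\<alpha>)..<\<tau> + m\<alpha>}. \<exists>V\<in>\<V>. \<exists>t\<le>\<tau> + m\<alpha> - 1. b < llr_stat p0 p1 G \<omega> t k V"
proof -
  have "\<exists>t. alarm p0 p1 \<V> m\<alpha> m\<alpha>' b G \<omega> t"
    using assms(2) unfolding stop_time_def by (auto split: if_splits)
  then obtain t where "alarm p0 p1 \<V> m\<alpha> m\<alpha>' b G \<omega> t" and "stop_time p0 p1 \<V> m\<alpha> m\<alpha>' b G \<omega> = enat t"
    unfolding stop_time_def by (auto intro: LeastI_ex)
  with assms have "\<tau> \<le> t" "t < \<tau> + m\<alpha>"
    by auto
  obtain k V where "1 \<le> k" "int t - int m\<alpha> \<le> int k" "int k \<le> int t - int m\<alpha>'"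
    and "V \<in> \<V>" "b < llr_stat p0 p1 G \<omega> t k V"
    using \<open>alarm p0 p1 \<V> m\<alpha> m\<alpha>' b G \<omega> t\<close> unfolding alarm_def by blast
  with \<open>\<tau> \<le> t\<close> \<open>t < \<tau> + m\<alpha>\<close> show ?thesis
    by (intro bexI[of _ k] bexI[of _ V] exI[of _ t]) auto
qed

lemma card_le_choose_if_subsets_of_card:
  assumes "finite A" and "\<And>V. V \<in> \<V> \<Longrightarrow> V \<subseteq> A \<and> card V = n"
  shows "finite \<V>" and "card \<V> \<le> card A choose n"
proof -
  have sub: "\<V> \<subseteq> {V. V \<subseteq> A \<and> card V = n}"
    using assms(2) by auto
  have fin: "finite {V. V \<subseteq> A \<and> card V = n}"
    using assms(1) by (auto intro: finite_subset[of _ "Pow A"])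
  show "finite \<V>"
    using fin sub by (rule finite_subset[rotated])
  have "card \<V> \<le> card {V. V \<subseteq> A \<and> card V = n}"
    using fin sub by (rule card_mono)
  also have "\<dots> = card A choose n"
    using assms(1) by (rule n_subsets)
  finally show "card \<V> \<le> card A choose n" .
qed

lemma (in prob_space) prob_le_card_mult_if_subset_UN:
  fixes \<epsilon> :: real
  assumes "A \<subseteq> (\<Union>i\<in>I. B i)" and "finite I"
    and "\<And>i. i \<in> I \<Longrightarrow> B i \<in> events" and "\<And>i. i \<in> I \<Longrightarrow> prob (B i) \<le> \<epsilon>"
  shows "prob A \<le> real (card I) * \<epsilon>"
proof -
  have "prob A \<le> prob (\<Union>i\<in>I. B i)"
    using assms(1-3) by (intro finite_measure_mono sets.finite_UN) auto
  also have "\<dots> \<le> (\<Sum>i\<in>I. prob (B i))"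
    using assms(2,3) by (intro finite_measure_subadditive_finite) auto
  also have "\<dots> \<le> real (card I) * \<epsilon>"
    using assms(4) by (rule sum_bounded_above)
  finally show ?thesis .
qed

lemma (in prob_space)
  fixes G :: "nat \<Rightarrow> nat \<Rightarrow> nat \<Rightarrow> 'a \<Rightarrow> bool"
  assumes ind: "indep_vars (\<lambda>_. count_space UNIV) (\<lambda>(t, i, j). G t i j)
      {(t, i, j). 1 \<le> t \<and> 1 \<le> i \<and> i < j \<and> j \<le> N}"
    and distr: "\<And>t i j. 1 \<le> t \<Longrightarrow> 1 \<le> i \<Longrightarrow> i < j \<Longrightarrow> j \<le> N \<Longrightarrow>
      distr M (count_space UNIV) (G t i j) = measure_pmf (bernoulli_pmf p0)"
    and p: "0 < p0" "p0 < 1" "0 < p1" "p1 < 1"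
    and V: "V \<subseteq> {1..N}" and k: "1 \<le> k"
  shows sets_ex_llr_stat_gt: "{\<omega>\<in>space M. \<exists>t\<le>n. b < llr_stat p0 p1 G \<omega> t k V} \<in> events"
    and prob_ex_llr_stat_gt_le: "prob {\<omega>\<in>space M. \<exists>t\<le>n. b < llr_stat p0 p1 G \<omega> t k V} \<le> exp (- b)"
proof -
  define X where "X = (\<lambda>(t, i, j). G t i j)"
  define E where "E = {(i, j). i \<in> V \<and> j \<in> V \<and> i < j}"
  define I where "I t = {k..t} \<times> E" for t
  have "finite V"
    using V finite_subset by blast
  then have fin: "finite (I n)"
    unfolding I_def E_def by (auto intro: finite_subset[of _ "V \<times> V"])
  have I_sub: "I n \<subseteq> {(t, i, j). 1 \<le> t \<and> 1 \<le> i \<and> i < j \<and> j \<le> N}"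
    using V k unfolding I_def E_def by auto
  have ind_I: "indep_vars (\<lambda>_. count_space UNIV) X (I n)"
    using indep_vars_subset[OF ind I_sub] unfolding X_def .
  have mono: "mono I"
    unfolding I_def by (auto intro!: monoI)
  have mean: "(\<integral>\<omega>. bernoulli_lr p0 p1 (X x \<omega>) \<partial>M) = 1" if "x \<in> I n" for x
  proof -
    obtain t i j where x: "x = (t, i, j)"
      by (cases x)
    with I_sub that have "1 \<le> t" "1 \<le> i" "i < j" "j \<le> N"
      by auto
    moreover have "X x \<in> measurable M (count_space UNIV)"
      using ind_I that by (simp add: indep_vars_def)
    ultimately show ?thesis
      using x distr p by (intro expectation_bernoulli_lr) (auto simp: X_def)
  qed
  have llr: "b < llr_stat p0 p1 G \<omega> t k V \<longleftrightarrow> exp b < prod_process (bernoulli_lr p0 p1) X I t \<omega>"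
    for \<omega> t
  proof -
    have "llr_stat p0 p1 G \<omega> t k V = ln (prod_process (bernoulli_lr p0 p1) X I t \<omega>)"
      unfolding X_def I_def E_def by (rule llr_stat_eq_ln_prod_process[OF \<open>finite V\<close> p])
    moreover have "0 < prod_process (bernoulli_lr p0 p1) X I t \<omega>"
      using p unfolding prod_process_def by (intro prod_pos) (simp add: bernoulli_lr_def)
    ultimately show ?thesis
      by (metis exp_less_cancel_iff exp_ln)
  qed
  have lr_meas: "bernoulli_lr p0 p1 \<in> borel_measurable (count_space UNIV)"
    by simp
  have lr_nonneg: "0 \<le> bernoulli_lr p0 p1 x" for x
    using p by (intro bernoulli_lr_nonneg) auto
  show "{\<omega>\<in>space M. \<exists>t\<le>n. b < llr_stat p0 p1 G \<omega> t k V} \<in> events"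
    unfolding llr by (rule sets_ex_prod_process_gt[OF ind_I mono fin lr_meas mean])
  have "prob {\<omega>\<in>space M. \<exists>t\<le>n. b < llr_stat p0 p1 G \<omega> t k V} \<le> 1 / exp b"
    unfolding llr using prob_ex_prod_process_gt_le[OF ind_I mono fin lr_meas mean lr_nonneg exp_gt_zero] .
  then show "prob {\<omega>\<in>space M. \<exists>t\<le>n. b < llr_stat p0 p1 G \<omega> t k V} \<le> exp (- b)"
    by (simp add: exp_minus field_simps)
qed

theorem lemma1:
  fixes M :: "'a measure"
    and G :: "nat \<Rightarrow> nat \<Rightarrow> nat \<Rightarrow> 'a \<Rightarrow> bool"
    and n N m\<alpha> m\<alpha>' :: nat and p0 p1 b :: real and \<V> :: "nat set set"
  assumes "1 \<le> n" and "n < N"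
    and "0 < p0" and "p0 < 1" and "0 < p1" and "p1 < 1"
    and "\<V> \<noteq> {}" and "\<And>V. V \<in> \<V> \<Longrightarrow> V \<subseteq> {1..N} \<and> card V = n"
    and "m\<alpha>' \<le> m\<alpha>"
    and "prob_space M"
    and "prob_space.indep_vars M (\<lambda>_. count_space UNIV) (\<lambda>(t,i,j). G t i j)
           {(t,i,j). 1 \<le> t \<and> 1 \<le> i \<and> i < j \<and> j \<le> N}"
    and "\<And>t i j. 1 \<le> t \<Longrightarrow> 1 \<le> i \<Longrightarrow> i < j \<Longrightarrow> j \<le> N \<Longrightarrow>
           distr M (count_space UNIV) (G t i j) = measure_pmf (bernoulli_pmf p0)"
  shows "\<forall>\<tau>\<ge>1. measure M {\<omega> \<in> space M.
            enat \<tau> \<le> stop_time p0 p1 \<V> m\<alpha> m\<alpha>' b G \<omega> \<and>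
            stop_time p0 p1 \<V> m\<alpha> m\<alpha>' b G \<omega> < enat (\<tau> + m\<alpha>)}
         \<le> 2 * real m\<alpha> * exp (- b) * real (N choose n)"
proof (intro allI impI)
  interpret prob_space M by fact
  fix \<tau> :: nat
  define T where "T = stop_time p0 p1 \<V> m\<alpha> m\<alpha>' b G"
  define K where "K = {max 1 (\<tau> - m\<alpha>)..<\<tau> + m\<alpha>}"
  define B where "B = (\<lambda>(k, V). {\<omega>\<in>space M. \<exists>t\<le>\<tau> + m\<alpha> - 1. b < llr_stat p0 p1 G \<omega> t k V})"
  have "finite \<V>" and card_\<V>: "card \<V> \<le> N choose n"
    using card_le_choose_if_subsets_of_card[of "{1..N}" \<V> n] assms(8) by auto
  have "measure M {\<omega> \<in> space M. enat \<tau> \<le> T \<omega> \<and> T \<omega> < enat (\<tau> + m\<alpha>)} \<le>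
      real (card (K \<times> \<V>)) * exp (- b)"
  proof (rule prob_le_card_mult_if_subset_UN)
    show "{\<omega> \<in> space M. enat \<tau> \<le> T \<omega> \<and> T \<omega> < enat (\<tau> + m\<alpha>)} \<subseteq> (\<Union>kV\<in>K \<times> \<V>. B kV)"
      unfolding T_def K_def B_def by (fastforce dest!: stop_time_in_window_imp_llr_gt)
    show "B kV \<in> events" "prob (B kV) \<le> exp (- b)" if "kV \<in> K \<times> \<V>" for kV
      using that assms(3-6,8,11,12) unfolding B_def K_def
      by (auto simp: sets_ex_llr_stat_gt prob_ex_llr_stat_gt_le)
  qed (simp add: K_def \<open>finite \<V>\<close>)
  also have "\<dots> \<le> real (2 * m\<alpha> * (N choose n)) * exp (- b)"
    using card_\<V> unfolding card_cartesian_product K_def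
    by (intro mult_right_mono of_nat_mono mult_le_mono) auto
  finally show "measure M {\<omega> \<in> space M. enat \<tau> \<le> stop_time p0 p1 \<V> m\<alpha> m\<alpha>' b G \<omega> \<and>
      stop_time p0 p1 \<V> m\<alpha> m\<alpha>' b G \<omega> < enat (\<tau> + m\<alpha>)} \<le> 2 * real m\<alpha> * exp (- b) * real (N choose n)"
    unfolding T_def by (simp add: mult_ac)
qed

end
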